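(* Let $A$ be a synaptic algebra, $p,q\in P$, $c:=(pqp+p^{\perp}q^{\perp}p^{\perp})^{1/2}$ and $s:=(pq^{\perp}p+p^{\perp}qp^{\perp})^{1/2}$. Then: (i) $c^2s^2=pqp+qpq-pqpq-qpqp=p(qp^{\perp}q)p+p^{\perp}(qpq)p^{\perp}=(pqp^{\perp}+p^{\perp}qp)^2$; (ii) $cs=|pqp^{\perp}+p^{\perp}qp|$.
   Context: Synaptic algebra (Foulis): $R$ is a real linear associative algebra with unit $1$, and $A\subseteq R$ is a real linear subspace with $1\in A$. For $a,b\in A$ write $aCb$ iff $ab=ba$; $C(a):=\{b\in A: aCb\}$; $CC(a):=\{b\in A: bCd \text{ for all } d\in C(a)\}$. $A$ is a synaptic algebra with enveloping algebra $R$ iff: (SA1) $A$ is a partially ordered archimedean real linear space with positive cone $A^+$, $1$ is an order unit, $\|\cdot\|$ the order-unit norm; (SA2) $a\in A\Rightarrow a^2\in A^+$; (SA3) $a,b\in A^+\Rightarrow aba\in A^+$; (SA4) if $a\in A$, $b\in A^+$, $aba=0$ then $ab=ba=0$; (SA5) if $a\in A^+$ there is $b\in A^+\cap CC(a)$ with $b^2=a$; (SA6) for $a\in A$ there is $p=p^2\in A$ with $ab=0\Leftrightarrow pb=0$ for all $b\in A$; (SA7) if $1\le a$ there is $b\in A$ with $ab=ba=1$; (SA8) if $a,b\in A$, $a_1\le a_2\le\cdots$ are pairwise commuting elements of $C(b)$ with $\|a-a_n\|\to0$, then $a\in C(b)$. $A$ is nondegenerate. Products are computed in $R$. $P:=\{p\in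 A:p=p^2\}$, $p^{\perp}:=1-p$. For $0\le a$, $a^{1/2}$ is its unique positive square root in $A$; $|a|:=(a^2)^{1/2}$. ($c$ and $s$ commute, so $cs\in A$.) *)

theory Defs
  imports Main "HOL.Real_Vector_Spaces"
begin

text \<open>A synaptic algebra A (a subset of the enveloping algebra, the type 'r) with
positive cone Pos.  The partial order is  a \<le> b  iff  b - a \<in> Pos.\<close>

definition sa_le :: "'r::real_algebra_1 set \<Rightarrow> 'r \<Rightarrow> 'r \<Rightarrow> bool" where
  "sa_le Pos a b \<longleftrightarrow> b - a \<in> Pos"

definition commutant :: "'r::real_algebra_1 set \<Rightarrow> 'r \<Rightarrow> 'r set" where
  "commutant A a = {b \<in> A. a * b = b * a}"

definition bicommutant :: "'r::real_algebra_1 set \<Rightarrow> 'r \<Rightarrow> 'r set" where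
  "bicommutant A a = {b \<in> A. \<forall>d \<in> commutant A a. b * d = d * b}"

definition ou_norm :: "'r::real_algebra_1 set \<Rightarrow> 'r \<Rightarrow> real" where
  "ou_norm Pos a = Inf {l. 0 < l \<and> sa_le Pos (- (l *\<^sub>R 1)) a \<and> sa_le Pos a (l *\<^sub>R 1)}"

definition synaptic_algebra :: "'r::real_algebra_1 set \<Rightarrow> 'r set \<Rightarrow> bool" where
  "synaptic_algebra A Pos \<longleftrightarrow>
     \<comment> \<open>A is a real linear subspace of R containing 1; nondegenerate\<close>
     0 \<in> A \<and> 1 \<in> A \<and> (1::'r) \<noteq> 0 \<and>
     (\<forall>a\<in>A. \<forall>b\<in>A. a + b \<in> A) \<and> (\<forall>a\<in>A. \<forall>r::real. r *\<^sub>R a \<in> A) \<and>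
     \<comment> \<open>(SA1) partially ordered archimedean real linear space, 1 an order unit\<close>
     Pos \<subseteq> A \<and> 0 \<in> Pos \<and>
     (\<forall>a\<in>Pos. \<forall>b\<in>Pos. a + b \<in> Pos) \<and>
     (\<forall>a\<in>Pos. \<forall>r::real. 0 \<le> r \<longrightarrow> r *\<^sub>R a \<in> Pos) \<and>
     (\<forall>a\<in>Pos. - a \<in> Pos \<longrightarrow> a = 0) \<and>
     (\<forall>a\<in>A. \<forall>b\<in>A. (\<forall>n::nat. sa_le Pos (of_nat n *\<^sub>R a) b) \<longrightarrow> sa_le Pos a 0) \<and>
     (\<forall>a\<in>A. \<exists>n::nat. sa_le Pos a (of_nat n *\<^sub>R 1)) \<and>
     \<comment> \<open>(SA2)\<close>
     (\<forall>a\<in>A. a * a \<in> Pos) \<and>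
     \<comment> \<open>(SA3)\<close>
     (\<forall>a\<in>Pos. \<forall>b\<in>Pos. a * b * a \<in> Pos) \<and>
     \<comment> \<open>(SA4)\<close>
     (\<forall>a\<in>A. \<forall>b\<in>Pos. a * b * a = 0 \<longrightarrow> a * b = 0 \<and> b * a = 0) \<and>
     \<comment> \<open>(SA5)\<close>
     (\<forall>a\<in>Pos. \<exists>b\<in>Pos. b \<in> bicommutant A a \<and> b * b = a) \<and>
     \<comment> \<open>(SA6)\<close>
     (\<forall>a\<in>A. \<exists>p\<in>A. p * p = p \<and> (\<forall>b\<in>A. a * b = 0 \<longleftrightarrow> p * b = 0)) \<and>
     \<comment> \<open>(SA7)\<close>
     (\<forall>a\<in>A. sa_le Pos 1 a \<longrightarrow> (\<exists>b\<in>A. a * b = 1 \<and> b * a = 1)) \<and>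
     \<comment> \<open>(SA8)\<close>
     (\<forall>a\<in>A. \<forall>b\<in>A. \<forall>an::nat \<Rightarrow> 'r.
        (\<forall>n. an n \<in> commutant A b) \<and>
        (\<forall>m n. an m * an n = an n * an m) \<and>
        (\<forall>n. sa_le Pos (an n) (an (Suc n))) \<and>
        (\<lambda>n. ou_norm Pos (a - an n)) \<longlonglongrightarrow> 0
        \<longrightarrow> a \<in> commutant A b)"

definition projections :: "'r::real_algebra_1 set \<Rightarrow> 'r set" where
  "projections A = {p \<in> A. p * p = p}"

definition perp :: "'r::real_algebra_1 \<Rightarrow> 'r" where
  "perp p = 1 - p"

definition sa_sqrt :: "'r::real_algebra_1 set \<Rightarrow> 'r \<Rightarrow> 'r" where
  "sa_sqrt Pos a = (THE b. b \<in> Pos \<and> b * b = a)"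

definition sa_abs :: "'r::real_algebra_1 set \<Rightarrow> 'r \<Rightarrow> 'r" where
  "sa_abs Pos a = sa_sqrt Pos (a * a)"

end

theory Submission
  imports Defs
begin

text \<open>Put \<open>C = pqp + p\<^sup>\<perp>q\<^sup>\<perp>p\<^sup>\<perp>\<close> and \<open>S = pq\<^sup>\<perp>p + p\<^sup>\<perp>qp\<^sup>\<perp>\<close>. Using only
  \<open>p\<^sup>2 = p\<close> and \<open>q\<^sup>2 = q\<close> one finds \<open>C + S = 1\<close>, and \<open>CS = C - C\<^sup>2\<close> expands to the three
  expressions of (i). Since \<open>C = 1 - s\<^sup>2\<close> commutes with \<open>s\<close> and \<open>c\<close> lies in the bicommutant
  of \<open>C\<close>, the roots \<open>c\<close> and \<open>s\<close> commute; hence \<open>(cs)\<^sup>2 = c\<^sup>2s\<^sup>2 = CS\<close>. Finally \<open>cs\<close> is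
  positive (it equals \<open>tct\<close> for the square root \<open>t\<close> of \<open>s\<close>), so by uniqueness of positive square roots
  it is the absolute value of \<open>pqp\<^sup>\<perp> + p\<^sup>\<perp>qp\<close>.\<close>

context
  fixes p q :: "'a::ring_1"
  assumes p: "p * p = p" and q: "q * q = q"
begin

private lemma idem_left: "p * (p * x) = p * x" "q * (q * x) = q * x"
  using p q by (metis mult.assoc)+

lemma idempotent_compressions_sum:
  "(p * q * p + (1 - p) * (1 - q) * (1 - p)) + (p * (1 - q) * p + (1 - p) * q * (1 - p)) = 1"
  by (simp add: algebra_simps p q idem_left)

lemma idempotent_compressions_product:
  "(p * q * p + (1 - p) * (1 - q) * (1 - p)) * (p * (1 - q) * p + (1 - p) * q * (1 - p))
     = p * q * p + q * p * q - p * q * p * q - q * p * q * p"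
  by (simp add: algebra_simps p q idem_left)

lemma idempotent_commutator_expansion:
  "p * q * p + q * p * q - p * q * p * q - q * p * q * p
     = p * (q * (1 - p) * q) * p + (1 - p) * (q * p * q) * (1 - p)"
  by (simp add: algebra_simps p q idem_left)

lemma idempotent_commutator_square:
  "p * (q * (1 - p) * q) * p + (1 - p) * (q * p * q) * (1 - p)
     = (p * q * (1 - p) + (1 - p) * q * p)\<^sup>2"
  by (simp add: power2_eq_square algebra_simps p q idem_left)

end

locale synaptic =
  fixes A Pos :: "'r::real_algebra_1 set"
  assumes synaptic_algebra: "synaptic_algebra A Pos"
begin

lemma synaptic_algebraD:
  "Pos \<subseteq> A" "1 \<in> A" "\<forall>a\<in>A. \<forall>b\<in>A. a + b \<in> A" "\<forall>a\<in>A. \<forall>r::real. r *\<^sub>R a \<in> A"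
  "\<forall>a\<in>Pos. \<forall>b\<in>Pos. a + b \<in> Pos" "\<forall>a\<in>Pos. - a \<in> Pos \<longrightarrow> a = 0" "\<forall>a\<in>A. a * a \<in> Pos"
  "\<forall>a\<in>Pos. \<forall>b\<in>Pos. a * b * a \<in> Pos"
  "\<forall>a\<in>A. \<forall>b\<in>Pos. a * b * a = 0 \<longrightarrow> a * b = 0 \<and> b * a = 0"
  "\<forall>a\<in>Pos. \<exists>b\<in>Pos. b \<in> bicommutant A a \<and> b * b = a"
  using synaptic_algebra unfolding synaptic_algebra_def by simp_all

lemmas pos_subset = synaptic_algebraD(1)
  and one_mem = synaptic_algebraD(2)

lemma add_mem: "a \<in> A \<Longrightarrow> b \<in> A \<Longrightarrow> a + b \<in> A"
  using synaptic_algebraD(3) by blast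

lemma scaleR_mem: "a \<in> A \<Longrightarrow> r *\<^sub>R a \<in> A"
  using synaptic_algebraD(4) by blast

lemma pos_add: "a \<in> Pos \<Longrightarrow> b \<in> Pos \<Longrightarrow> a + b \<in> Pos"
  using synaptic_algebraD(5) by blast

lemma pos_antisym: "a \<in> Pos \<Longrightarrow> - a \<in> Pos \<Longrightarrow> a = 0"
  using synaptic_algebraD(6) by blast

lemma square_pos: "a \<in> A \<Longrightarrow> a * a \<in> Pos"
  using synaptic_algebraD(7) by blast

lemma sandwich_pos: "a \<in> Pos \<Longrightarrow> b \<in> Pos \<Longrightarrow> a * b * a \<in> Pos"
  using synaptic_algebraD(8) by blast

lemma sandwich_eq_zeroD: "a \<in> A \<Longrightarrow> b \<in> Pos \<Longrightarrow> a * b * a = 0 \<Longrightarrow> a * b = 0"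
  using synaptic_algebraD(9) by blast

lemma bicommutant_root_exists: "a \<in> Pos \<Longrightarrow> \<exists>b\<in>Pos. b \<in> bicommutant A a \<and> b * b = a"
  using synaptic_algebraD(10) by blast

lemma diff_mem: "a \<in> A \<Longrightarrow> b \<in> A \<Longrightarrow> a - b \<in> A"
  using add_mem[of a "(-1) *\<^sub>R b"] scaleR_mem[of b "-1"] by simp

lemma one_pos: "1 \<in> Pos"
  using square_pos[OF one_mem] by simp

lemma square_eq_zero: "x \<in> A \<Longrightarrow> x * x = 0 \<Longrightarrow> x = 0"
  using sandwich_eq_zeroD[OF _ one_pos, of x] by simp

lemma pos_add_eq_zero:
  assumes "a \<in> Pos" "b \<in> Pos" "a + b = 0"
  shows "a = 0" "b = 0"
proof -
  from \<open>a + b = 0\<close> have "- a = b" by (simp add: add_eq_0_iff)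
  with assms show "a = 0" using pos_antisym by simp
  with \<open>a + b = 0\<close> show "b = 0" by simp
qed

lemma projection_pos: "p \<in> projections A \<Longrightarrow> p \<in> Pos"
  using square_pos[of p] by (simp add: projections_def)

lemma perp_projection: "p \<in> projections A \<Longrightarrow> perp p \<in> projections A"
  using diff_mem[OF one_mem] by (simp add: projections_def perp_def algebra_simps)

lemma pos_root_unique:
  assumes b0: "b0 \<in> bicommutant A a" "b0 \<in> Pos" "b0 * b0 = a"
    and b: "b \<in> Pos" "b * b = a"
  shows "b = b0"
proof -
  have bA: "b \<in> A" "b0 \<in> A" using b b0 pos_subset by auto
  have "b \<in> commutant A a"
    using bA b(2) by (auto simp: commutant_def mult.assoc[symmetric])
  then have comm: "b * b0 = b0 * b" using b0(1) by (auto simp: bicommutant_def)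
  define d where "d = b - b0"
  have dA: "d \<in> A" and dd: "d * d \<in> A" "d * d \<in> Pos"
    using diff_mem[OF bA] square_pos pos_subset by (auto simp: d_def)
  \<comment> \<open>\<open>d\<close> kills \<open>b + b0\<close>, so the two positive compressions below add up to zero\<close>
  have "d * (b + b0) = 0" by (simp add: d_def algebra_simps b(2) b0(3) comm)
  have "d*d*b*(d*d) + d*d*b0*(d*d) = d * (d * (b + b0)) * (d * d)"
    by (simp add: algebra_simps)
  also have "\<dots> = 0" using \<open>d * (b + b0) = 0\<close> by simp
  finally have "d*d*b*(d*d) = 0" "d*d*b0*(d*d) = 0"
    using pos_add_eq_zero sandwich_pos[OF dd(2) b(1)] sandwich_pos[OF dd(2) b0(2)] by blast+
  then have "d*d*b = 0" "d*d*b0 = 0"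
    using sandwich_eq_zeroD[OF dd(1)] b(1) b0(2) by blast+
  have "d*d*d = d*d*(b - b0)" by (simp add: d_def)
  also have "\<dots> = 0" using \<open>d*d*b = 0\<close> \<open>d*d*b0 = 0\<close> by (simp add: right_diff_distrib)
  finally have "(d*d)*(d*d) = 0" by (simp add: mult.assoc[symmetric])
  then have "d*d = 0" using square_eq_zero dd(1) by blast
  then have "d = 0" using square_eq_zero dA by blast
  then show ?thesis by (simp add: d_def)
qed

lemma sa_sqrt_bicommutant_root:
  assumes "a \<in> Pos"
  obtains "sa_sqrt Pos a \<in> Pos" "sa_sqrt Pos a \<in> bicommutant A a"
    "sa_sqrt Pos a * sa_sqrt Pos a = a"
proof -
  obtain b0 where b0: "b0 \<in> Pos" "b0 \<in> bicommutant A a" "b0 * b0 = a"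
    using bicommutant_root_exists[OF assms] by blast
  have "sa_sqrt Pos a = b0"
    unfolding sa_sqrt_def
  proof (rule the_equality)
    show "b0 \<in> Pos \<and> b0 * b0 = a" using b0 by simp
    show "x = b0" if "x \<in> Pos \<and> x * x = a" for x
      using pos_root_unique[OF b0(2,1,3)] that by blast
  qed
  with b0 that show thesis by simp
qed

lemma sa_sqrt_square:
  assumes "b \<in> Pos"
  shows "sa_sqrt Pos (b * b) = b"
proof -
  have "b * b \<in> Pos" using assms pos_subset square_pos by blast
  then obtain root: "sa_sqrt Pos (b * b) \<in> Pos" "sa_sqrt Pos (b * b) \<in> bicommutant A (b * b)"
      "sa_sqrt Pos (b * b) * sa_sqrt Pos (b * b) = b * b"
    by (rule sa_sqrt_bicommutant_root)
  show ?thesis using pos_root_unique[OF root(2,1,3) assms refl] by simp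
qed

lemma sa_sqrt_commute:
  assumes "a \<in> Pos" "x \<in> A" "x * a = a * x"
  shows "sa_sqrt Pos a * x = x * sa_sqrt Pos a"
proof -
  obtain "sa_sqrt Pos a \<in> bicommutant A a"
    using sa_sqrt_bicommutant_root[OF assms(1)] .
  with assms(2,3) show ?thesis by (auto simp: bicommutant_def commutant_def)
qed

lemma commuting_mult_pos:
  assumes c: "c \<in> Pos" and s: "s \<in> Pos" and cs: "c * s = s * c"
  shows "c * s \<in> Pos"
proof -
  obtain t where t: "t \<in> Pos" "t \<in> bicommutant A s" "t * t = s"
    using bicommutant_root_exists[OF s] by blast
  have "t * c = c * t"
    using t(2) c cs pos_subset by (auto simp: bicommutant_def commutant_def)
  then have "t * c * t = c * s" by (simp add: mult.assoc flip: t(3))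
  then show ?thesis using sandwich_pos[OF t(1) c] by simp
qed

lemma sa_sqrt_complement_commute:
  assumes a: "a \<in> Pos" and b: "b \<in> Pos" and sum: "a + b = 1"
  shows "sa_sqrt Pos a * sa_sqrt Pos b = sa_sqrt Pos b * sa_sqrt Pos a"
proof -
  define t where "t = sa_sqrt Pos b"
  obtain "t \<in> Pos" "t * t = b"
    using sa_sqrt_bicommutant_root[OF b] unfolding t_def[symmetric] .
  moreover from this sum have "a = 1 - t * t" by (simp add: algebra_simps)
  moreover have "t * (1 - t * t) = (1 - t * t) * t" by (simp add: algebra_simps)
  ultimately show ?thesis using sa_sqrt_commute[OF a] pos_subset unfolding t_def by auto
qed

lemma sa_abs_eq_commuting_mult:
  assumes "c \<in> Pos" "s \<in> Pos" "c * s = s * c" "x * x = (c * c) * (s * s)"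
  shows "sa_abs Pos x = c * s"
proof -
  have "x * x = (c * s) * (c * s)" using assms(3,4) by (metis mult.assoc)
  then show ?thesis
    unfolding sa_abs_def using sa_sqrt_square[OF commuting_mult_pos[OF assms(1-3)]] by simp
qed

end

theorem theorem5p2:
  fixes A Pos :: "'r::real_algebra_1 set" and p q c s :: 'r
  assumes SA: "synaptic_algebra A Pos"
    and p: "p \<in> projections A" and q: "q \<in> projections A"
    and c: "c = sa_sqrt Pos (p * q * p + perp p * perp q * perp p)"
    and s: "s = sa_sqrt Pos (p * perp q * p + perp p * q * perp p)"
  shows "c\<^sup>2 * s\<^sup>2 = p * q * p + q * p * q - p * q * p * q - q * p * q * p
       \<and> p * q * p + q * p * q - p * q * p * q - q * p * q * p
           = p * (q * perp p * q) * p + perp p * (q * p * q) * perp p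
       \<and> p * (q * perp p * q) * p + perp p * (q * p * q) * perp p
           = (p * q * perp p + perp p * q * p)\<^sup>2
       \<and> c * s = sa_abs Pos (p * q * perp p + perp p * q * p)"
proof -
  interpret synaptic A Pos using SA by (rule synaptic.intro)
  define C where "C = p * q * p + perp p * perp q * perp p"
  define S where "S = p * perp q * p + perp p * q * perp p"
  have idem: "p * p = p" "q * q = q" using p q by (simp_all add: projections_def)
  have pos: "C \<in> Pos" "S \<in> Pos"
    using p q perp_projection by (simp_all add: C_def S_def pos_add sandwich_pos projection_pos)
  have sum: "C + S = 1"
    using idempotent_compressions_sum[OF idem] by (simp add: C_def S_def perp_def)
  have roots: "c \<in> Pos" "c * c = C" "s \<in> Pos" "s * s = S"
    using sa_sqrt_bicommutant_root[OF pos(1)] sa_sqrt_bicommutant_root[OF pos(2)]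
    by (auto simp: c s C_def S_def)
  have comm: "c * s = s * c"
    using sa_sqrt_complement_commute[OF pos sum] by (simp add: c s C_def S_def)
  note identities = idempotent_compressions_product[OF idem]
    idempotent_commutator_expansion[OF idem] idempotent_commutator_square[OF idem]
  then have CS: "c\<^sup>2 * s\<^sup>2 = C * S" "C * S = (p * q * perp p + perp p * q * p)\<^sup>2"
    by (simp_all add: power2_eq_square roots C_def S_def perp_def)
  have "sa_abs Pos (p * q * perp p + perp p * q * p) = c * s"
    using sa_abs_eq_commuting_mult[OF roots(1,3) comm] CS(2) by (simp add: power2_eq_square roots)
  with CS(1) identities show ?thesis by (simp add: C_def S_def perp_def)
qed

end
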